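(* Let $(A_n)_{n\in\mathbb Z^+}$ be a sequence of invertible linear operators on $\mathbb R^d$ that admits a strong exponential dichotomy with respect to a sequence of norms $\|\cdot\|_n$, $n\in\mathbb Z^+$, and projections $P_n$, $n\in\mathbb Z^+$. Let $Y\subset\mathbb R^d$ be any subspace with $\mathbb R^d=\operatorname{Im}P_0\oplus Y$, let $P_0'$ be the projection onto $\operatorname{Im}P_0$ along $Y$, and set $P'_n=\mathcal A(n,0)P'_0\mathcal A(0,n)$ for $n\in\mathbb Z^+$. Then $(A_n)_{n\in\mathbb Z^+}$ admits a strong exponential dichotomy with respect to the norms $\|\cdot\|_n$ and projections $P'_n$, $n\in\mathbb Z^+$.
   Context: $\mathbb Z^+=\{0,1,\dots\}$. $\mathcal A(m,n)=A_{m-1}\cdots A_n$ ($m>n$), $\mathrm{Id}$ ($m=n$), $A_m^{-1}\cdots A_{n-1}^{-1}$ ($m<n$). Strong exponential dichotomy w.r.t. norms $\{\|\cdot\|_n\}$ and projections $P_n$: $A_nP_n=P_{n+1}A_n$ for all $n$, and there exist $K>0$, $a\ge\lambda>0$ with, for $m\ge n$, $x\in\mathbb R^d$, $Q_m=\mathrm{Id}-P_m$: $\|\mathcal A(m,n)P_nx\|_m\le Ke^{-\lambda(m-n)}\|x\|_n$, $\|\mathcal A(n,m)Q_mx\|_n\le Ke^{-\lambda(m-n)}\|x\|_m$, $\|\mathcal A(m,n)x\|_m\le Ke^{a(m-n)}\|x\|_n$, $\|\mathcal A(n,m)x\|_n\le Ke^{a(m-n)}\|x\|_m$. *)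

theory Defs
  imports "HOL-Analysis.Analysis"
begin

text \<open>R^d is modelled by an arbitrary Euclidean space 'a (d = DIM('a)).\<close>

fun fwd :: "(nat \<Rightarrow> 'a \<Rightarrow> 'a) \<Rightarrow> nat \<Rightarrow> nat \<Rightarrow> 'a \<Rightarrow> 'a" where
  "fwd A n 0 = id"
| "fwd A n (Suc k) = A (n + k) \<circ> fwd A n k"

fun bwd :: "(nat \<Rightarrow> 'a \<Rightarrow> 'a) \<Rightarrow> nat \<Rightarrow> nat \<Rightarrow> 'a \<Rightarrow> 'a" where
  "bwd A m 0 = id"
| "bwd A m (Suc k) = bwd A m k \<circ> inv (A (m + k))"

definition cocyc :: "(nat \<Rightarrow> 'a \<Rightarrow> 'a) \<Rightarrow> nat \<Rightarrow> nat \<Rightarrow> 'a \<Rightarrow> 'a" where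
  "cocyc A m n = (if n \<le> m then fwd A n (m - n) else bwd A m (n - m))"

definition is_norm :: "('a::real_vector \<Rightarrow> real) \<Rightarrow> bool" where
  "is_norm N \<longleftrightarrow> (\<forall>x. 0 \<le> N x) \<and> (\<forall>x. N x = 0 \<longleftrightarrow> x = 0)
     \<and> (\<forall>c x. N (c *\<^sub>R x) = \<bar>c\<bar> * N x) \<and> (\<forall>x y. N (x + y) \<le> N x + N y)"

definition is_projection :: "('a::real_vector \<Rightarrow> 'a) \<Rightarrow> bool" where
  "is_projection P \<longleftrightarrow> linear P \<and> P \<circ> P = P"

definition strong_exp_dichotomy ::
  "(nat \<Rightarrow> 'a::real_vector \<Rightarrow> 'a) \<Rightarrow> (nat \<Rightarrow> 'a \<Rightarrow> real) \<Rightarrow> (nat \<Rightarrow> 'a \<Rightarrow> 'a) \<Rightarrow> bool" where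
  "strong_exp_dichotomy A N P \<longleftrightarrow>
     (\<forall>n. is_projection (P n)) \<and>
     (\<forall>n. A n \<circ> P n = P (Suc n) \<circ> A n) \<and>
     (\<exists>K a lam::real. K > 0 \<and> lam > 0 \<and> a \<ge> lam \<and>
        (\<forall>m n x. n \<le> m \<longrightarrow>
           N m (cocyc A m n (P n x)) \<le> K * exp (- lam * real (m - n)) * N n x
         \<and> N n (cocyc A n m (x - P m x)) \<le> K * exp (- lam * real (m - n)) * N m x
         \<and> N m (cocyc A m n x) \<le> K * exp (a * real (m - n)) * N n x
         \<and> N n (cocyc A n m x) \<le> K * exp (a * real (m - n)) * N m x))"

end

theory Submission
  imports Defs
begin

text \<open>Because \<open>P\<^sub>0'\<close> and \<open>P\<^sub>0\<close> have the same range, \<open>P\<^sub>0' = P\<^sub>0 + P\<^sub>0' (Id - P\<^sub>0)\<close>, hence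
  \<open>P\<^sub>n' = P\<^sub>n + \<A>(n,0) P\<^sub>0' \<A>(0,n) (Id - P\<^sub>n)\<close>. The correction term passes through time \<open>0\<close>:
  getting there from time \<open>n\<close> along the unstable direction gains a factor \<open>exp (-\<lambda> n)\<close>, the
  bounded map \<open>P\<^sub>0'\<close> lands in \<open>Im P\<^sub>0\<close>, and moving on to time \<open>m\<close> along the stable direction
  gains \<open>exp (-\<lambda> m)\<close>. Since \<open>exp (-\<lambda> (m + n)) \<le> exp (-\<lambda> (m - n))\<close>, both contraction
  estimates hold with the constant \<open>K + K\<^sup>2 \<parallel>P\<^sub>0'\<parallel>\<close>, while the growth estimates do not
  involve the projections at all.\<close>

section \<open>Norms on a Euclidean space\<close>

context
  fixes N :: "'a::real_vector \<Rightarrow> real"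
  assumes N: "is_norm N"
begin

lemma is_norm_nonneg: "0 \<le> N x"
  using N unfolding is_norm_def by blast

lemma is_norm_eq_0_iff: "N x = 0 \<longleftrightarrow> x = 0"
  using N unfolding is_norm_def by blast

lemma is_norm_zero [simp]: "N 0 = 0"
  using N unfolding is_norm_def by blast

lemma is_norm_scaleR: "N (c *\<^sub>R x) = \<bar>c\<bar> * N x"
  using N unfolding is_norm_def by blast

lemma is_norm_triangle: "N (x + y) \<le> N x + N y"
  using N unfolding is_norm_def by blast

lemma is_norm_minus: "N (- x) = N x"
  using is_norm_scaleR[of "-1" x] by simp

lemma is_norm_diff_le: "N (x - y) \<le> N x + N y"
  using is_norm_triangle[of x "- y"] by (simp add: is_norm_minus)

lemma is_norm_reverse_triangle: "\<bar>N x - N y\<bar> \<le> N (x - y)"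
  using is_norm_triangle[of "x - y" y] is_norm_triangle[of "y - x" x]
    is_norm_minus[of "x - y"] by simp

lemma is_norm_sum_le: "N (sum f S) \<le> (\<Sum>i\<in>S. N (f i))"
proof (induction S rule: infinite_finite_induct)
  case (insert i S)
  then show ?case using is_norm_triangle[of "f i" "sum f S"] by simp
qed simp_all

end

context
  fixes N :: "'a::euclidean_space \<Rightarrow> real"
  assumes N: "is_norm N"
begin

lemma is_norm_le_norm: "\<exists>M\<ge>0. \<forall>x. N x \<le> M * norm x"
proof (intro exI conjI allI)
  show "0 \<le> (\<Sum>b\<in>Basis. N b)"
    by (simp add: sum_nonneg is_norm_nonneg[OF N])
next
  fix x :: 'a
  have "N x = N (\<Sum>b\<in>Basis. (x \<bullet> b) *\<^sub>R b)"
    by (simp add: euclidean_representation)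
  also have "\<dots> \<le> (\<Sum>b\<in>Basis. N ((x \<bullet> b) *\<^sub>R b))"
    by (rule is_norm_sum_le[OF N])
  also have "\<dots> = (\<Sum>b\<in>Basis. \<bar>x \<bullet> b\<bar> * N b)"
    by (simp add: is_norm_scaleR[OF N])
  also have "\<dots> \<le> (\<Sum>b\<in>Basis. norm x * N b)"
    by (intro sum_mono mult_right_mono) (simp_all add: Basis_le_norm is_norm_nonneg[OF N])
  finally show "N x \<le> (\<Sum>b\<in>Basis. N b) * norm x"
    by (simp add: sum_distrib_left mult.commute)
qed

lemma is_norm_continuous: "continuous_on UNIV N"
proof -
  obtain M where "0 \<le> M" and M: "\<And>x. N x \<le> M * norm x"
    using is_norm_le_norm by blast
  have "\<bar>N x - N y\<bar> \<le> M * norm (x - y)" for x y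
    using M[of "x - y"] is_norm_reverse_triangle[OF N, of x y] by linarith
  with \<open>0 \<le> M\<close> have "M-lipschitz_on UNIV N"
    by (intro lipschitz_onI) (simp_all add: dist_real_def dist_norm)
  then show ?thesis
    by (rule lipschitz_on_continuous_on)
qed

lemma is_norm_ge_norm: "\<exists>c>0. \<forall>x. c * norm x \<le> N x"
proof -
  obtain b :: 'a where "b \<in> Basis"
    using nonempty_Basis by blast
  then have "sphere (0::'a) 1 \<noteq> {}"
    by (auto simp: norm_Basis)
  then obtain z where "z \<in> sphere 0 1" and "\<forall>y \<in> sphere 0 1. N z \<le> N y"
    using continuous_attains_inf[OF compact_sphere _ continuous_on_subset[OF is_norm_continuous]]
    by blast
  then have z: "norm z = 1" and z_min: "\<And>y. norm y = 1 \<Longrightarrow> N z \<le> N y"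
    by simp_all
  have "0 < N z"
    using z is_norm_nonneg[OF N, of z] is_norm_eq_0_iff[OF N, of z] by fastforce
  moreover have "N z * norm x \<le> N x" for x
  proof (cases "x = 0")
    case False
    then have "N z \<le> N ((1 / norm x) *\<^sub>R x)"
      by (intro z_min) simp
    also have "\<dots> = N x / norm x"
      by (simp add: is_norm_scaleR[OF N])
    finally show ?thesis
      using False by (simp add: field_simps)
  qed (simp add: is_norm_nonneg[OF N])
  ultimately show ?thesis
    by blast
qed

lemma is_norm_linear_bound:
  assumes "linear L"
  shows "\<exists>C\<ge>0. \<forall>x. N (L x) \<le> C * N x"
proof -
  obtain M where "0 \<le> M" and M: "\<And>x. N x \<le> M * norm x"
    using is_norm_le_norm by blast
  obtain c where "0 < c" and c: "\<And>x. c * norm x \<le> N x"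
    using is_norm_ge_norm by blast
  obtain B where "0 < B" and B: "\<And>x. norm (L x) \<le> norm x * B"
    using assms bounded_linear.pos_bounded linear_conv_bounded_linear by blast
  have "N (L x) \<le> M * B / c * N x" for x
  proof -
    have "N (L x) \<le> M * (norm x * B)"
      using M[of "L x"] B[of x] \<open>0 \<le> M\<close> by (meson mult_left_mono order_trans)
    also have "\<dots> \<le> M * (N x / c * B)"
      using c[of x] \<open>0 < c\<close> \<open>0 < B\<close> \<open>0 \<le> M\<close>
      by (intro mult_left_mono mult_right_mono) (simp_all add: field_simps)
    finally show ?thesis
      by (simp add: mult_ac)
  qed
  then show ?thesis
    using \<open>0 \<le> M\<close> \<open>0 < B\<close> \<open>0 < c\<close> by (intro exI[of _ "M * B / c"]) simp
qed

end

section \<open>Projections along a complement\<close>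

lemma direct_sum_unique:
  assumes "subspace S" "subspace Y" "S \<inter> Y = {0}"
    and "u \<in> S" "u' \<in> S" "v \<in> Y" "v' \<in> Y" "u + v = u' + v'"
  shows "u = u'"
proof -
  have "u - u' = v' - v"
    using assms(8) by (simp add: algebra_simps)
  moreover have "u - u' \<in> S" and "v' - v \<in> Y"
    using assms by (simp_all add: subspace_diff)
  ultimately have "u - u' \<in> S \<inter> Y"
    by simp
  then show ?thesis
    using assms(3) by simp
qed

context
  fixes S Y :: "'a::real_vector set" and Q :: "'a \<Rightarrow> 'a"
  assumes S: "subspace S" and Y: "subspace Y" and S_Y: "S \<inter> Y = {0}"
    and Q: "\<And>x. Q x \<in> S \<and> x - Q x \<in> Y"
begin

lemma projection_along_unique: "u \<in> S \<Longrightarrow> x - u \<in> Y \<Longrightarrow> Q x = u"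
  using direct_sum_unique[OF S Y S_Y, of "Q x" u "x - Q x" "x - u"] Q by simp

lemma projection_along_fixes: "x \<in> S \<Longrightarrow> Q x = x"
  by (rule projection_along_unique) (simp_all add: subspace_0[OF Y])

lemma linear_projection_along: "linear Q"
proof (rule linearI)
  show "Q (x + y) = Q x + Q y" for x y
    using Q[of x] Q[of y] subspace_add[OF S] subspace_add[OF Y, of "x - Q x" "y - Q y"]
    by (intro projection_along_unique) (simp_all add: algebra_simps)
  show "Q (r *\<^sub>R x) = r *\<^sub>R Q x" for r x
    using Q[of x] subspace_scale[OF S] subspace_scale[OF Y, of "x - Q x" r]
    by (intro projection_along_unique) (simp_all add: algebra_simps)
qed

end

section \<open>The cocycle of an invertible sequence\<close>

lemma linear_inv_bij:
  assumes "linear f" "bij f"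
  shows "linear (inv f)"
proof (rule linearI)
  have f_inv: "f (inv f x) = x" for x
    using assms(2) by (simp add: bij_is_surj surj_f_inv_f)
  have inv_f: "inv f (f x) = x" for x
    using assms(2) by (simp add: bij_is_inj)
  show "inv f (x + y) = inv f x + inv f y" for x y
    using inv_f[of "inv f x + inv f y"] by (simp add: linear_add[OF assms(1)] f_inv)
  show "inv f (r *\<^sub>R x) = r *\<^sub>R inv f x" for r x
    using inv_f[of "r *\<^sub>R inv f x"] by (simp add: linear_scale[OF assms(1)] f_inv)
qed

locale invertible_linear_seq =
  fixes A :: "nat \<Rightarrow> 'a::real_vector \<Rightarrow> 'a"
  assumes linear_A: "linear (A n)" and bij_A: "bij (A n)"
begin

lemma inv_A_A [simp]: "inv (A n) (A n x) = x"
  using bij_A by (simp add: bij_is_inj)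

lemma A_inv_A [simp]: "A n (inv (A n) x) = x"
  using bij_A by (simp add: bij_is_surj surj_f_inv_f)

lemma cocyc_from_0: "cocyc A n 0 = fwd A 0 n"
  by (simp add: cocyc_def)

lemma cocyc_to_0: "cocyc A 0 n = bwd A 0 n"
  by (cases n) (simp_all add: cocyc_def)

lemma cocyc_from_0_Suc: "cocyc A (Suc n) 0 x = A n (cocyc A n 0 x)"
  by (simp add: cocyc_from_0)

lemma cocyc_to_0_Suc: "cocyc A 0 (Suc n) x = cocyc A 0 n (inv (A n) x)"
  by (simp add: cocyc_to_0)

lemma cocyc_0_0 [simp]: "cocyc A 0 0 x = x"
  by (simp add: cocyc_def)

lemma cocyc_from_to_0 [simp]: "cocyc A n 0 (cocyc A 0 n x) = x"
  by (induction n arbitrary: x) (simp_all add: cocyc_from_0_Suc cocyc_to_0_Suc)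

lemma cocyc_to_from_0 [simp]: "cocyc A 0 n (cocyc A n 0 x) = x"
  by (induction n arbitrary: x) (simp_all add: cocyc_from_0_Suc cocyc_to_0_Suc)

lemma cocyc_via_0: "cocyc A m n x = cocyc A m 0 (cocyc A 0 n x)"
proof -
  have fwd: "fwd A n k y = cocyc A (n + k) 0 (cocyc A 0 n y)" for k y
    by (induction k arbitrary: y) (simp_all add: cocyc_from_0_Suc)
  have bwd: "bwd A m k y = cocyc A m 0 (cocyc A 0 (m + k) y)" for k y
    by (induction k arbitrary: y) (simp_all add: cocyc_to_0_Suc)
  show ?thesis
    unfolding cocyc_def[of A m n] by (simp add: fwd bwd)
qed

lemma cocyc_trans: "cocyc A m n (cocyc A n k x) = cocyc A m k x"
  using cocyc_via_0[of m n] cocyc_via_0[of n k] cocyc_via_0[of m k x] by simp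

lemma linear_cocyc: "linear (cocyc A m n)"
proof -
  have "linear (cocyc A n 0)" for n
  proof (induction n)
    case (Suc n)
    then show ?case
      using linear_compose[OF Suc linear_A] by (simp add: o_def cocyc_from_0_Suc)
  qed (use linear_id in \<open>simp add: cocyc_def id_def\<close>)
  moreover have "linear (cocyc A 0 n)" for n
  proof (induction n)
    case (Suc n)
    then show ?case
      using linear_compose[OF linear_inv_bij[OF linear_A bij_A] Suc]
      by (simp add: o_def cocyc_to_0_Suc)
  qed (use linear_id in \<open>simp add: cocyc_def id_def\<close>)
  moreover have "cocyc A m n = cocyc A m 0 \<circ> cocyc A 0 n"
    by (simp add: fun_eq_iff cocyc_via_0[of m n])
  ultimately show ?thesis
    by (simp add: linear_compose)
qed

lemma invariant_family_from_0:
  assumes "\<And>n x. A n (P n x) = P (Suc n) (A n x)"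
  shows "P n x = cocyc A n 0 (P 0 (cocyc A 0 n x))"
proof (induction n arbitrary: x)
  case (Suc n)
  have "P (Suc n) x = P (Suc n) (A n (inv (A n) x))"
    by simp
  also have "\<dots> = A n (P n (inv (A n) x))"
    by (simp add: assms)
  also have "\<dots> = cocyc A (Suc n) 0 (P 0 (cocyc A 0 (Suc n) x))"
    by (simp add: Suc cocyc_from_0_Suc cocyc_to_0_Suc)
  finally show ?case .
qed simp

lemma cocyc_invariant_family:
  assumes "\<And>n x. A n (P n x) = P (Suc n) (A n x)"
  shows "cocyc A m n (P n x) = P m (cocyc A m n x)"
  by (simp add: invariant_family_from_0[OF assms, of n] invariant_family_from_0[OF assms, of m]
      cocyc_trans)

lemma transported_invariant:
  "A n \<circ> (cocyc A n 0 \<circ> Q \<circ> cocyc A 0 n) = (cocyc A (Suc n) 0 \<circ> Q \<circ> cocyc A 0 (Suc n)) \<circ> A n"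
  by (simp add: fun_eq_iff cocyc_from_0_Suc cocyc_to_0_Suc)

lemma transported_projection:
  assumes "is_projection Q"
  shows "is_projection (cocyc A n 0 \<circ> Q \<circ> cocyc A 0 n)"
  using assms unfolding is_projection_def
  by (auto simp: fun_eq_iff intro!: linear_compose linear_cocyc)

end

section \<open>Changing the projections of an exponential dichotomy\<close>

locale exp_dichotomy = invertible_linear_seq A
  for A :: "nat \<Rightarrow> 'a::real_vector \<Rightarrow> 'a" +
  fixes N :: "nat \<Rightarrow> 'a \<Rightarrow> real" and P :: "nat \<Rightarrow> 'a \<Rightarrow> 'a" and K a lam :: real
  assumes norm_N: "is_norm (N n)"
    and projection_P: "is_projection (P n)"
    and A_P: "A n (P n x) = P (Suc n) (A n x)"
    and K_pos: "0 < K" and lam_pos: "0 < lam" and lam_le_a: "lam \<le> a"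
    and stable: "n \<le> m \<Longrightarrow> N m (cocyc A m n (P n x)) \<le> K * exp (- lam * real (m - n)) * N n x"
    and unstable: "n \<le> m \<Longrightarrow> N n (cocyc A n m (x - P m x)) \<le> K * exp (- lam * real (m - n)) * N m x"
    and growth_fwd: "n \<le> m \<Longrightarrow> N m (cocyc A m n x) \<le> K * exp (a * real (m - n)) * N n x"
    and growth_bwd: "n \<le> m \<Longrightarrow> N n (cocyc A n m x) \<le> K * exp (a * real (m - n)) * N m x"

lemma strong_exp_dichotomyI:
  assumes "\<And>n. is_projection (P n)" "\<And>n. A n \<circ> P n = P (Suc n) \<circ> A n"
    and "0 < K" "0 < lam" "lam \<le> a"
    and "\<And>m n x. n \<le> m \<Longrightarrow> N m (cocyc A m n (P n x)) \<le> K * exp (- lam * real (m - n)) * N n x"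
    and "\<And>m n x. n \<le> m \<Longrightarrow> N n (cocyc A n m (x - P m x)) \<le> K * exp (- lam * real (m - n)) * N m x"
    and "\<And>m n x. n \<le> m \<Longrightarrow> N m (cocyc A m n x) \<le> K * exp (a * real (m - n)) * N n x"
    and "\<And>m n x. n \<le> m \<Longrightarrow> N n (cocyc A n m x) \<le> K * exp (a * real (m - n)) * N m x"
  shows "strong_exp_dichotomy A N P"
  unfolding strong_exp_dichotomy_def
  by (intro conjI allI assms(1,2), rule exI[of _ K], rule exI[of _ a], rule exI[of _ lam])
    (use assms(3-) in blast)

lemma strong_exp_dichotomyE:
  assumes "strong_exp_dichotomy A N P" "\<And>n. linear (A n)" "\<And>n. bij (A n)" "\<And>n. is_norm (N n)"
  obtains K a lam where "exp_dichotomy A N P K a lam"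
proof -
  obtain K a lam where "0 < K" "0 < lam" "lam \<le> a" and bounds: "\<forall>m n x. n \<le> m \<longrightarrow>
       N m (cocyc A m n (P n x)) \<le> K * exp (- lam * real (m - n)) * N n x
     \<and> N n (cocyc A n m (x - P m x)) \<le> K * exp (- lam * real (m - n)) * N m x
     \<and> N m (cocyc A m n x) \<le> K * exp (a * real (m - n)) * N n x
     \<and> N n (cocyc A n m x) \<le> K * exp (a * real (m - n)) * N m x"
    using assms(1) unfolding strong_exp_dichotomy_def by blast
  have "exp_dichotomy A N P K a lam"
  proof (intro exp_dichotomy.intro invertible_linear_seq.intro exp_dichotomy_axioms.intro)
    show "is_projection (P n)" and "A n (P n x) = P (Suc n) (A n x)" for n x
      using assms(1) unfolding strong_exp_dichotomy_def by (simp_all add: fun_eq_iff)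
    show "N m (cocyc A m n (P n x)) \<le> K * exp (- lam * real (m - n)) * N n x"
      and "N n (cocyc A n m (x - P m x)) \<le> K * exp (- lam * real (m - n)) * N m x"
      and "N m (cocyc A m n x) \<le> K * exp (a * real (m - n)) * N n x"
      and "N n (cocyc A n m x) \<le> K * exp (a * real (m - n)) * N m x"
      if "n \<le> m" for m n x
      using bounds[rule_format, OF that] by (simp_all only:)
  qed (use assms(2-4) \<open>0 < K\<close> \<open>0 < lam\<close> \<open>lam \<le> a\<close> in simp_all)
  then show ?thesis
    by (rule that)
qed

lemma exp_decay_absorb:
  fixes lam K D X :: real
  assumes "0 \<le> lam" "0 \<le> D" "0 \<le> X" "n \<le> m"
  shows "K * exp (- lam * real (m - n)) * X + D * exp (- lam * real (m + n)) * X
    \<le> (K + D) * exp (- lam * real (m - n)) * X"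
proof -
  have "exp (- lam * real (m + n)) \<le> exp (- lam * real (m - n))"
    using assms by (simp add: mult_left_mono)
  then have "D * exp (- lam * real (m + n)) * X \<le> D * exp (- lam * real (m - n)) * X"
    using assms by (simp add: mult_left_mono mult_right_mono)
  then show ?thesis
    by (simp add: algebra_simps)
qed

context exp_dichotomy
begin

lemma P_idem: "P n (P n x) = P n x"
  using projection_P unfolding is_projection_def by (metis comp_apply)

lemma linear_P: "linear (P n)"
  using projection_P unfolding is_projection_def by blast

lemma cocyc_P: "cocyc A m n (P n x) = P m (cocyc A m n x)"
  using cocyc_invariant_family A_P by blast

context
  fixes Q :: "'a \<Rightarrow> 'a" and C :: real
  assumes linear_Q: "linear Q" and Q_P0: "\<And>x. Q (P 0 x) = P 0 x" and P0_Q: "\<And>x. P 0 (Q x) = Q x"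
    and Q_bounded: "\<And>x. N 0 (Q x) \<le> C * N 0 x" and C_nonneg: "0 \<le> C"
begin

lemma transported_eq:
  "cocyc A n 0 (Q (cocyc A 0 n x)) = P n x + cocyc A n 0 (Q (cocyc A 0 n (x - P n x)))"
proof -
  define u where "u = cocyc A 0 n x"
  have "cocyc A 0 n (x - P n x) = u - P 0 u"
    by (simp add: u_def linear_diff[OF linear_cocyc] cocyc_P)
  then have "cocyc A n 0 (Q (cocyc A 0 n (x - P n x))) = cocyc A n 0 (Q u) - P n x"
    by (simp add: linear_diff[OF linear_Q] linear_diff[OF linear_cocyc] Q_P0 cocyc_P u_def)
  then show ?thesis
    by (simp add: u_def)
qed

lemma correction_decay:
  "N m (cocyc A m 0 (Q (cocyc A 0 n (x - P n x)))) \<le> K * K * C * exp (- lam * real (m + n)) * N n x"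
proof -
  define w where "w = cocyc A 0 n (x - P n x)"
  have "N m (cocyc A m 0 (Q w)) = N m (cocyc A m 0 (P 0 (Q w)))"
    by (simp add: P0_Q)
  also have "\<dots> \<le> K * exp (- lam * real m) * N 0 (Q w)"
    using stable[of 0 m "Q w"] by simp
  also have "\<dots> \<le> K * exp (- lam * real m) * (C * N 0 w)"
    using K_pos by (simp add: Q_bounded)
  also have "\<dots> \<le> K * exp (- lam * real m) * (C * (K * exp (- lam * real n) * N n x))"
    using unstable[of 0 n x] K_pos C_nonneg by (simp add: w_def mult_left_mono)
  also have "\<dots> = K * K * C * exp (- lam * real (m + n)) * N n x"
    by (simp add: exp_add[symmetric] algebra_simps)
  finally show ?thesis
    by (simp add: w_def)
qed

lemma transported_stable:
  assumes "n \<le> m"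
  shows "N m (cocyc A m n (cocyc A n 0 (Q (cocyc A 0 n x))))
    \<le> (K + K * K * C) * exp (- lam * real (m - n)) * N n x"
proof -
  have "cocyc A m n (cocyc A n 0 (Q (cocyc A 0 n x)))
      = cocyc A m n (P n x) + cocyc A m 0 (Q (cocyc A 0 n (x - P n x)))"
    by (simp add: transported_eq[of n x] linear_add[OF linear_cocyc] cocyc_trans)
  then have "N m (cocyc A m n (cocyc A n 0 (Q (cocyc A 0 n x))))
      \<le> N m (cocyc A m n (P n x)) + N m (cocyc A m 0 (Q (cocyc A 0 n (x - P n x))))"
    by (simp add: is_norm_triangle[OF norm_N])
  also have "\<dots> \<le> K * exp (- lam * real (m - n)) * N n x
      + K * K * C * exp (- lam * real (m + n)) * N n x"
    by (rule add_mono[OF stable[OF assms] correction_decay])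
  also have "\<dots> \<le> (K + K * K * C) * exp (- lam * real (m - n)) * N n x"
    using lam_pos K_pos C_nonneg assms
    by (intro exp_decay_absorb) (simp_all add: is_norm_nonneg[OF norm_N])
  finally show ?thesis .
qed

lemma transported_unstable:
  assumes "n \<le> m"
  shows "N n (cocyc A n m (x - cocyc A m 0 (Q (cocyc A 0 m x))))
    \<le> (K + K * K * C) * exp (- lam * real (m - n)) * N m x"
proof -
  have "cocyc A n m (x - cocyc A m 0 (Q (cocyc A 0 m x)))
      = cocyc A n m (x - P m x) - cocyc A n 0 (Q (cocyc A 0 m (x - P m x)))"
    by (simp add: transported_eq[of m x] linear_diff[OF linear_cocyc] linear_add[OF linear_cocyc]
        cocyc_trans algebra_simps)
  then have "N n (cocyc A n m (x - cocyc A m 0 (Q (cocyc A 0 m x))))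
      \<le> N n (cocyc A n m (x - P m x)) + N n (cocyc A n 0 (Q (cocyc A 0 m (x - P m x))))"
    by (simp add: is_norm_diff_le[OF norm_N])
  also have "\<dots> \<le> K * exp (- lam * real (m - n)) * N m x
      + K * K * C * exp (- lam * real (m + n)) * N m x"
    by (rule add_mono[OF unstable[OF assms] correction_decay[of n m x, unfolded add.commute[of n m]]])
  also have "\<dots> \<le> (K + K * K * C) * exp (- lam * real (m - n)) * N m x"
    using lam_pos K_pos C_nonneg assms
    by (intro exp_decay_absorb) (simp_all add: is_norm_nonneg[OF norm_N])
  finally show ?thesis .
qed

lemma growth_absorb:
  "0 \<le> X \<Longrightarrow> K * exp (a * real (m - n)) * X \<le> (K + K * K * C) * exp (a * real (m - n)) * X"
  using K_pos C_nonneg by (intro mult_right_mono) simp_all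

theorem strong_exp_dichotomy_transported:
  "strong_exp_dichotomy A N (\<lambda>n. cocyc A n 0 \<circ> Q \<circ> cocyc A 0 n)"
proof (rule strong_exp_dichotomyI[where K = "K + K * K * C" and a = a and lam = lam])
  have "Q (Q x) = Q x" for x
    using Q_P0[of "Q x"] by (simp add: P0_Q)
  then have "is_projection Q"
    unfolding is_projection_def using linear_Q by (simp add: fun_eq_iff)
  then show "is_projection (cocyc A n 0 \<circ> Q \<circ> cocyc A 0 n)" for n
    by (rule transported_projection)
  show "A n \<circ> (cocyc A n 0 \<circ> Q \<circ> cocyc A 0 n) = (cocyc A (Suc n) 0 \<circ> Q \<circ> cocyc A 0 (Suc n)) \<circ> A n"
    for n
    by (rule transported_invariant)
  show "0 < K + K * K * C"
    using K_pos C_nonneg by (simp add: add_pos_nonneg)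
  show "0 < lam" "lam \<le> a"
    by (fact lam_pos lam_le_a)+
  fix m n :: nat and x
  assume "n \<le> m"
  then show "N m (cocyc A m n ((cocyc A n 0 \<circ> Q \<circ> cocyc A 0 n) x))
      \<le> (K + K * K * C) * exp (- lam * real (m - n)) * N n x"
    and "N n (cocyc A n m (x - (cocyc A m 0 \<circ> Q \<circ> cocyc A 0 m) x))
      \<le> (K + K * K * C) * exp (- lam * real (m - n)) * N m x"
    unfolding comp_apply by (rule transported_stable transported_unstable)+
  show "N m (cocyc A m n x) \<le> (K + K * K * C) * exp (a * real (m - n)) * N n x"
    using growth_fwd[OF \<open>n \<le> m\<close>] growth_absorb[OF is_norm_nonneg[OF norm_N]] by (rule order_trans)
  show "N n (cocyc A n m x) \<le> (K + K * K * C) * exp (a * real (m - n)) * N m x"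
    using growth_bwd[OF \<open>n \<le> m\<close>] growth_absorb[OF is_norm_nonneg[OF norm_N]] by (rule order_trans)
qed

end

end

theorem corollary7p1:
  fixes A :: "nat \<Rightarrow> 'a::euclidean_space \<Rightarrow> 'a"
    and N :: "nat \<Rightarrow> 'a \<Rightarrow> real"
    and P :: "nat \<Rightarrow> 'a \<Rightarrow> 'a"
    and Y :: "'a set"
    and P0' :: "'a \<Rightarrow> 'a"
  assumes "\<forall>n. linear (A n) \<and> bij (A n)"
    and "\<forall>n. is_norm (N n)"
    and "strong_exp_dichotomy A N P"
    and "subspace Y"
    and "range (P 0) \<inter> Y = {0}"
    and "{u + v | u v. u \<in> range (P 0) \<and> v \<in> Y} = UNIV"
    and "\<forall>x. P0' x \<in> range (P 0) \<and> x - P0' x \<in> Y"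
  shows "strong_exp_dichotomy A N (\<lambda>n. cocyc A n 0 \<circ> P0' \<circ> cocyc A 0 n)"
proof -
  obtain K a lam where "exp_dichotomy A N P K a lam"
    by (rule strong_exp_dichotomyE[OF assms(3)]) (use assms(1,2) in auto)
  then interpret exp_dichotomy A N P K a lam .
  have "subspace (range (P 0))"
    using real_vector.linear_subspace_image[OF linear_P subspace_UNIV] .
  note along = this assms(4,5) assms(7)[rule_format]
  have P0'_P0: "P0' (P 0 x) = P 0 x" for x
    by (rule projection_along_fixes[OF along]) simp
  have P0_P0': "P 0 (P0' x) = P0' x" for x
    using assms(7) P_idem by (metis rangeE)
  obtain C where "0 \<le> C" "\<forall>x. N 0 (P0' x) \<le> C * N 0 x"
    using is_norm_linear_bound[OF norm_N linear_projection_along[OF along]] by blast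
  then show ?thesis
    using strong_exp_dichotomy_transported[OF linear_projection_along[OF along] P0'_P0 P0_P0']
    by blast
qed

end
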